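(* Let $(\mathcal L_{0\,\mathcal N_0},\mathcal L_{1\,\mathcal N_1},t,\rho)$ be a crossed module of Nijenhuis Lie conformal algebras, where $\mathcal L_{0\,\mathcal N_0}=(\mathcal L_0,[\cdot_\lambda\cdot]_{\mathcal L_0},\mathcal N_0)$ and $\mathcal L_{1\,\mathcal N_1}=(\mathcal L_1,[\cdot_\lambda\cdot]_{\mathcal L_1},\mathcal N_1)$. Equip the $\mathbb C[\partial]$-module $\mathcal L_0\oplus\mathcal L_1$ with the $\lambda$-bracket $$[(p,m)_\lambda(q,n)]:=\big([p_\lambda q]_{\mathcal L_0},\ \rho(p)_\lambda n-\rho(q)_{-\partial-\lambda}m+[m_\lambda n]_{\mathcal L_1}\big),\qquad (p,m),(q,n)\in\mathcal L_0\oplus\mathcal L_1 .$$ Then $(\mathcal L_0\oplus\mathcal L_1,[\cdot_\lambda\cdot],\mathcal N_0\oplus\mathcal N_1)$ is a Nijenhuis Lie conformal algebra.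
   Context: All spaces are over $\mathbb C$. A Lie conformal algebra is a $\mathbb C[\partial]$-module with a $\mathbb C$-bilinear $\lambda$-bracket $[\cdot_\lambda\cdot]$ into $\mathcal L[\lambda]$ satisfying $[\partial a_\lambda b]=-\lambda[a_\lambda b]$, $[a_\lambda\partial b]=(\partial+\lambda)[a_\lambda b]$, $[a_\lambda b]=-[b_{-\partial-\lambda}a]$, $[a_\lambda[b_\mu c]]=[[a_\lambda b]_{\lambda+\mu}c]+[b_\mu[a_\lambda c]]$. A Nijenhuis operator on it is a $\mathbb C[\partial]$-linear $\mathcal N$ with $[\mathcal N(p)_\lambda\mathcal N(q)]=\mathcal N([\mathcal N(p)_\lambda q]+[p_\lambda\mathcal N(q)]-\mathcal N([p_\lambda q]))$; a Nijenhuis Lie conformal algebra is a Lie conformal algebra with a Nijenhuis operator; a morphism of such is a $\mathbb C[\partial]$-linear bracket-preserving map intertwining the Nijenhuis operators. A conformal representation of a Lie conformal algebra $\mathcal L$ on a $\mathbb C[\partial]$-module $\mathcal M$ is a $\mathbb C$-linear $\rho:\mathcal L\otimes\mathcal M\to\mathcal M[\lambda]$, $(p,m)\mapsto\rho(p)_\lambda m$, with $\rho(\partial p)_\lambda m=-\lambda\rho(p)_\lambda m$, $\rho(p)_\lambda\partial m=(\partial+\lambda)\rho(p)_\lambda m$, and $\rho(p)_\lambda(\rho(q)_\mu m)-\rho(q)_\mu(\rho(p)_\lambda m)=\rho([p_\lambda q])_{\lambda+\mu}m$. A representation of a Nijenhuis Lie conformal algebra $(\mathcal L,[\cdot_\lambda\cdot],\mathcal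 N)$ is a triple $(\mathcal M,\rho,\mathcal N_{\mathcal M})$ with $\rho$ a conformal representation and $\mathcal N_{\mathcal M}$ a $\mathbb C[\partial]$-linear map with $\rho(\mathcal N(p))_\lambda\mathcal N_{\mathcal M}(m)=\mathcal N_{\mathcal M}\big(\rho(\mathcal N(p))_\lambda m+\rho(p)_\lambda\mathcal N_{\mathcal M}(m)-\mathcal N_{\mathcal M}(\rho(p)_\lambda m)\big)$. A crossed module of Nijenhuis Lie conformal algebras is a quadruple $(\mathcal L_{0\,\mathcal N_0},\mathcal L_{1\,\mathcal N_1},t,\rho)$ where $\mathcal L_{0\,\mathcal N_0},\mathcal L_{1\,\mathcal N_1}$ are Nijenhuis Lie conformal algebras, $t:\mathcal L_1\to\mathcal L_0$ is a morphism of Nijenhuis Lie conformal algebras, and $\rho:\mathcal L_0\otimes\mathcal L_1\to\mathcal L_1[\lambda]$ is conformal sesquilinear and makes $(\mathcal L_1,\rho,\mathcal N_1)$ a representation of $\mathcal L_{0\,\mathcal N_0}$, such that $t(\rho(p)_\lambda m)=[p_\lambda t(m)]_{\mathcal L_0}$ and $\rho(t(m))_\lambda n=[m_\lambda n]_{\mathcal L_1}$ for all $p\in\mathcal L_0$, $m,n\in\mathcal L_1$. *)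

theory Defs
  imports Complex_Main "HOL-Computational_Algebra.Polynomial" "HOL-Library.Product_Plus"
begin

text \<open>
  A C[d]-module is a type 'a :: ab_group_add with a complex scalar
  multiplication s (a module in the sense of the locale module) and a C-linear
  operator D (the action of d). An element of L[lambda] is an 'a poly whose k-th
  coefficient is the coefficient of lambda^k.
\<close>

definition cdmodule :: "(complex \<Rightarrow> 'a::ab_group_add \<Rightarrow> 'a) \<Rightarrow> ('a \<Rightarrow> 'a) \<Rightarrow> bool" where
  "cdmodule s D \<longleftrightarrow> module s \<and> module_hom s s D"

definition cdlinear ::
  "(complex \<Rightarrow> 'a::ab_group_add \<Rightarrow> 'a) \<Rightarrow> ('a \<Rightarrow> 'a) \<Rightarrow>
   (complex \<Rightarrow> 'b::ab_group_add \<Rightarrow> 'b) \<Rightarrow> ('b \<Rightarrow> 'b) \<Rightarrow> ('a \<Rightarrow> 'b) \<Rightarrow> bool" where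
  "cdlinear s D s' D' f \<longleftrightarrow> module_hom s s' f \<and> (\<forall>x. f (D x) = D' (f x))"

definition lam_mul :: "'a::zero poly \<Rightarrow> 'a poly" where
  "lam_mul p = pCons 0 p"

definition Dpoly :: "('a::zero \<Rightarrow> 'a) \<Rightarrow> 'a poly \<Rightarrow> 'a poly" where
  "Dpoly D p = map_poly D p"

definition spoly :: "(complex \<Rightarrow> 'a::zero \<Rightarrow> 'a) \<Rightarrow> complex \<Rightarrow> 'a poly \<Rightarrow> 'a poly" where
  "spoly s c p = map_poly (s c) p"

definition peval :: "(complex \<Rightarrow> 'a::comm_monoid_add \<Rightarrow> 'a) \<Rightarrow> 'a poly \<Rightarrow> complex \<Rightarrow> 'a" where
  "peval s p z = (\<Sum>k\<le>degree p. s (z ^ k) (coeff p k))"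

text \<open>Substitution lambda := -d-lambda: for p = sum_k lambda^k c_k,
  neg_subst D p = sum_k (-d-lambda)^k c_k (d acting on the coefficients).\<close>
definition neg_shift :: "('a::ab_group_add \<Rightarrow> 'a) \<Rightarrow> 'a poly \<Rightarrow> 'a poly" where
  "neg_shift D q = - Dpoly D q - lam_mul q"

definition neg_subst :: "('a::ab_group_add \<Rightarrow> 'a) \<Rightarrow> 'a poly \<Rightarrow> 'a poly" where
  "neg_subst D p = (\<Sum>k\<le>degree p. (neg_shift D ^^ k) [:coeff p k:])"

definition bilinear_lam ::
  "(complex \<Rightarrow> 'a::ab_group_add \<Rightarrow> 'a) \<Rightarrow> (complex \<Rightarrow> 'b::ab_group_add \<Rightarrow> 'b) \<Rightarrow>
   (complex \<Rightarrow> 'c::ab_group_add \<Rightarrow> 'c) \<Rightarrow> ('a \<Rightarrow> 'b \<Rightarrow> 'c poly) \<Rightarrow> bool" where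
  "bilinear_lam sa sb sc f \<longleftrightarrow>
     (\<forall>x y z. f (x + y) z = f x z + f y z) \<and>
     (\<forall>c x z. f (sa c x) z = spoly sc c (f x z)) \<and>
     (\<forall>x y z. f x (y + z) = f x y + f x z) \<and>
     (\<forall>c x z. f x (sb c z) = spoly sc c (f x z))"

definition sesquilinear ::
  "('a \<Rightarrow> 'a) \<Rightarrow> ('b::ab_group_add \<Rightarrow> 'b) \<Rightarrow> ('a \<Rightarrow> 'b \<Rightarrow> 'b poly) \<Rightarrow> bool" where
  "sesquilinear DA DB f \<longleftrightarrow>
     (\<forall>a b. f (DA a) b = - lam_mul (f a b)) \<and>
     (\<forall>a b. f a (DB b) = Dpoly DB (f a b) + lam_mul (f a b))"

text \<open>Lie conformal algebra. The Jacobi identity is an identity in L[lambda,mu];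
  it is stated by evaluating lambda, mu at all complex numbers.\<close>
definition LCA :: "(complex \<Rightarrow> 'a::ab_group_add \<Rightarrow> 'a) \<Rightarrow> ('a \<Rightarrow> 'a) \<Rightarrow> ('a \<Rightarrow> 'a \<Rightarrow> 'a poly) \<Rightarrow> bool" where
  "LCA s D br \<longleftrightarrow>
     cdmodule s D \<and> bilinear_lam s s s br \<and> sesquilinear D D br \<and>
     (\<forall>a b. br a b = - neg_subst D (br b a)) \<and>
     (\<forall>a b c l m.
        peval s (br a (peval s (br b c) m)) l =
        peval s (br (peval s (br a b) l) c) (l + m) + peval s (br b (peval s (br a c) l)) m)"

definition nijenhuis :: "('a::ab_group_add \<Rightarrow> 'a \<Rightarrow> 'a poly) \<Rightarrow> ('a \<Rightarrow> 'a) \<Rightarrow> bool" where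
  "nijenhuis br N \<longleftrightarrow>
     (\<forall>p q. br (N p) (N q) = map_poly N (br (N p) q + br p (N q) - map_poly N (br p q)))"

definition NLCA ::
  "(complex \<Rightarrow> 'a::ab_group_add \<Rightarrow> 'a) \<Rightarrow> ('a \<Rightarrow> 'a) \<Rightarrow> ('a \<Rightarrow> 'a \<Rightarrow> 'a poly) \<Rightarrow> ('a \<Rightarrow> 'a) \<Rightarrow> bool" where
  "NLCA s D br N \<longleftrightarrow> LCA s D br \<and> cdlinear s D s D N \<and> nijenhuis br N"

definition NLCA_morphism ::
  "(complex \<Rightarrow> 'a::ab_group_add \<Rightarrow> 'a) \<Rightarrow> ('a \<Rightarrow> 'a) \<Rightarrow> ('a \<Rightarrow> 'a \<Rightarrow> 'a poly) \<Rightarrow> ('a \<Rightarrow> 'a) \<Rightarrow>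
   (complex \<Rightarrow> 'b::ab_group_add \<Rightarrow> 'b) \<Rightarrow> ('b \<Rightarrow> 'b) \<Rightarrow> ('b \<Rightarrow> 'b \<Rightarrow> 'b poly) \<Rightarrow> ('b \<Rightarrow> 'b) \<Rightarrow>
   ('a \<Rightarrow> 'b) \<Rightarrow> bool" where
  "NLCA_morphism s D br N s' D' br' N' f \<longleftrightarrow>
     cdlinear s D s' D' f \<and>
     (\<forall>a b. map_poly f (br a b) = br' (f a) (f b)) \<and>
     (\<forall>a. f (N a) = N' (f a))"

definition conf_rep ::
  "(complex \<Rightarrow> 'a::ab_group_add \<Rightarrow> 'a) \<Rightarrow> ('a \<Rightarrow> 'a) \<Rightarrow> ('a \<Rightarrow> 'a \<Rightarrow> 'a poly) \<Rightarrow>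
   (complex \<Rightarrow> 'm::ab_group_add \<Rightarrow> 'm) \<Rightarrow> ('m \<Rightarrow> 'm) \<Rightarrow> ('a \<Rightarrow> 'm \<Rightarrow> 'm poly) \<Rightarrow> bool" where
  "conf_rep s D br sM DM rho \<longleftrightarrow>
     cdmodule sM DM \<and> bilinear_lam s sM sM rho \<and> sesquilinear D DM rho \<and>
     (\<forall>p q m l mu.
        peval sM (rho p (peval sM (rho q m) mu)) l - peval sM (rho q (peval sM (rho p m) l)) mu =
        peval sM (rho (peval s (br p q) l) m) (l + mu))"

definition NLCA_rep ::
  "(complex \<Rightarrow> 'a::ab_group_add \<Rightarrow> 'a) \<Rightarrow> ('a \<Rightarrow> 'a) \<Rightarrow> ('a \<Rightarrow> 'a \<Rightarrow> 'a poly) \<Rightarrow> ('a \<Rightarrow> 'a) \<Rightarrow>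
   (complex \<Rightarrow> 'm::ab_group_add \<Rightarrow> 'm) \<Rightarrow> ('m \<Rightarrow> 'm) \<Rightarrow> ('a \<Rightarrow> 'm \<Rightarrow> 'm poly) \<Rightarrow> ('m \<Rightarrow> 'm) \<Rightarrow> bool" where
  "NLCA_rep s D br N sM DM rho NM \<longleftrightarrow>
     conf_rep s D br sM DM rho \<and> cdlinear sM DM sM DM NM \<and>
     (\<forall>p m. rho (N p) (NM m) =
        map_poly NM (rho (N p) m + rho p (NM m) - map_poly NM (rho p m)))"

definition crossed_module ::
  "(complex \<Rightarrow> 'a::ab_group_add \<Rightarrow> 'a) \<Rightarrow> ('a \<Rightarrow> 'a) \<Rightarrow> ('a \<Rightarrow> 'a \<Rightarrow> 'a poly) \<Rightarrow> ('a \<Rightarrow> 'a) \<Rightarrow>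
   (complex \<Rightarrow> 'b::ab_group_add \<Rightarrow> 'b) \<Rightarrow> ('b \<Rightarrow> 'b) \<Rightarrow> ('b \<Rightarrow> 'b \<Rightarrow> 'b poly) \<Rightarrow> ('b \<Rightarrow> 'b) \<Rightarrow>
   ('b \<Rightarrow> 'a) \<Rightarrow> ('a \<Rightarrow> 'b \<Rightarrow> 'b poly) \<Rightarrow> bool" where
  "crossed_module s0 D0 br0 N0 s1 D1 br1 N1 t rho \<longleftrightarrow>
     NLCA s0 D0 br0 N0 \<and> NLCA s1 D1 br1 N1 \<and>
     NLCA_morphism s1 D1 br1 N1 s0 D0 br0 N0 t \<and>
     NLCA_rep s0 D0 br0 N0 s1 D1 rho N1 \<and>
     (\<forall>p m. map_poly t (rho p m) = br0 p (t m)) \<and>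
     (\<forall>m n. rho (t m) n = br1 m n)"

definition pair_poly :: "'a::comm_monoid_add poly \<Rightarrow> 'b::comm_monoid_add poly \<Rightarrow> ('a \<times> 'b) poly" where
  "pair_poly P Q = map_poly (\<lambda>x. (x, 0)) P + map_poly (\<lambda>y. (0, y)) Q"

end

theory Submission
  imports Defs
begin

text \<open>
  The bracket is the semidirect sum of \<open>L\<^sub>0\<close> and \<open>L\<^sub>1\<close>, with \<open>L\<^sub>0\<close> acting through \<open>\<rho>\<close>.
  Bilinearity, sesquilinearity and skew-symmetry hold componentwise, and the Nijenhuis identity
  splits into the Nijenhuis conditions for the two brackets and for \<open>\<rho>\<close>.

  The Jacobi identity is additive in each argument, so it suffices to check it when every
  argument lies in \<open>L\<^sub>0\<close> or in \<open>L\<^sub>1\<close>; by skew-symmetry it is symmetric in the first two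
  arguments, which leaves six cases. Two are the Jacobi identities of \<open>L\<^sub>0\<close> and \<open>L\<^sub>1\<close> and
  one is the representation axiom. The other three follow from that axiom: with \<open>q = t n\<close> it
  says that \<open>\<rho>(p)\<close> acts on \<open>L\<^sub>1\<close> by derivations; substituting the operator \<open>-\<partial>-\<lambda>-\<mu>\<close> for
  its second variable gives the case \<open>(L\<^sub>0, L\<^sub>1, L\<^sub>0)\<close>; and putting \<open>p = t m\<close> there gives
  \<open>(L\<^sub>1, L\<^sub>1, L\<^sub>0)\<close>. The substitution is legitimate because a polynomial with coefficients in
  a complex vector space is determined by its values at all complex numbers.
\<close>

lemma additive_funpow: "additive f \<Longrightarrow> additive (f ^^ k)"
  for f :: "'a::ab_group_add \<Rightarrow> 'a"
  by (induction k) (simp_all add: additive_def)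

lemma additive_scale: "module s \<Longrightarrow> additive (s c)"
  by (simp add: additive_def module.scale_right_distrib)

lemma additive_map_poly: "additive h \<Longrightarrow> additive (map_poly h)"
  by (simp add: additive_def poly_eq_iff coeff_map_poly additive.zero additive.add)

lemma map_poly_additive:
  assumes "additive h"
  shows "map_poly h (P + Q) = map_poly h P + map_poly h Q"
    and "map_poly h (- P) = - map_poly h P"
    and "map_poly h (P - Q) = map_poly h P - map_poly h Q"
  using additive_map_poly[OF assms] by (simp_all add: additive.add additive.minus additive.diff)

lemma lam_mul_simps [simp]:
  "lam_mul (P + Q) = lam_mul P + lam_mul Q" "lam_mul (- P) = - lam_mul P"
  "lam_mul (P - Q) = lam_mul P - lam_mul Q"
  for P Q :: "'a::ab_group_add poly"
  by (simp_all add: lam_mul_def)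

section \<open>Evaluating polynomials at an operator\<close>

text \<open>With \<open>E = s z\<close> this is \<open>peval\<close> at \<open>z\<close>; with \<open>E = neg_shift_op D (s z)\<close> it
  evaluates at \<open>\<lambda> = -\<partial>-z\<close>.\<close>

definition op_eval :: "('m::ab_group_add \<Rightarrow> 'm) \<Rightarrow> 'm poly \<Rightarrow> 'm" where
  "op_eval E P = (\<Sum>k\<le>degree P. (E ^^ k) (coeff P k))"

lemma op_eval_eq_sum:
  assumes "additive E" "degree P \<le> n"
  shows "op_eval E P = (\<Sum>k\<le>n. (E ^^ k) (coeff P k))"
  unfolding op_eval_def
  by (rule sum.mono_neutral_left)
     (use assms in \<open>auto simp: coeff_eq_0 additive.zero[OF additive_funpow]\<close>)

lemma op_eval_pCons:
  assumes "additive E"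
  shows "op_eval E (pCons a P) = a + E (op_eval E P)"
proof -
  have "op_eval E (pCons a P) = (\<Sum>k\<le>Suc (degree P). (E ^^ k) (coeff (pCons a P) k))"
    using assms degree_pCons_le by (rule op_eval_eq_sum)
  also have "\<dots> = a + (\<Sum>k\<le>degree P. E ((E ^^ k) (coeff P k)))"
    by (subst sum.atMost_Suc_shift) (simp add: funpow_swap1)
  also have "\<dots> = a + E (op_eval E P)"
    by (simp add: op_eval_def additive.sum[OF assms])
  finally show ?thesis .
qed

lemma additive_op_eval:
  fixes E :: "'m::ab_group_add \<Rightarrow> 'm"
  assumes "additive E"
  shows "additive (op_eval E)"
proof (rule additive.intro)
  fix P Q :: "'m poly"
  let ?n = "max (degree P) (degree Q)"
  show "op_eval E (P + Q) = op_eval E P + op_eval E Q"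
    using assms
    by (simp add: op_eval_eq_sum[of E _ ?n] degree_add_le sum.distrib
        additive.add[OF additive_funpow])
qed

lemma op_eval_simps [simp]:
  assumes "additive E"
  shows "op_eval E 0 = 0"
    and "op_eval E (P + Q) = op_eval E P + op_eval E Q"
    and "op_eval E (- P) = - op_eval E P"
    and "op_eval E (P - Q) = op_eval E P - op_eval E Q"
    and "op_eval E [:a:] = a"
    and "op_eval E (lam_mul P) = E (op_eval E P)"
  using additive_op_eval[OF assms] assms
  by (simp_all add: additive.add additive.minus additive.diff additive.zero op_eval_pCons
      lam_mul_def)

lemma op_eval_map_poly:
  assumes "additive E" "additive E'" "additive h" "\<And>x. h (E x) = E' (h x)"
  shows "op_eval E' (map_poly h P) = h (op_eval E P)"
proof (induction P)
  case (pCons a P)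
  then show ?case
    using assms by (simp add: map_poly_pCons additive.zero op_eval_pCons additive.add)
qed (use assms in \<open>simp add: additive.zero\<close>)

lemma peval_eq_op_eval:
  assumes "module s"
  shows "peval s P z = op_eval (s z) P"
proof -
  have "s (z ^ k) x = (s z ^^ k) x" for k x
    by (induction k) (simp_all add: module.scale_one[OF assms] flip: module.scale_scale[OF assms])
  then show ?thesis by (simp add: peval_def op_eval_def)
qed

lemma op_eval_mult: "op_eval ((*) z) P = poly P (z::complex)"
  by (induction P) (simp_all add: op_eval_pCons additive_def distrib_left)

lemma poly_eq_if_peval_eq:
  assumes s: "module s" and eq: "\<And>z. peval s P z = peval s Q z"
  shows "P = Q"
proof (rule ccontr)
  interpret vs: vector_space s
    using s by (simp add: vector_space_def module_def)
  assume "P \<noteq> Q"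
  then obtain k where nonzero: "coeff (P - Q) k \<noteq> 0"
    by (metis eq_iff_diff_eq_0 leading_coeff_0_iff)
  define c where "c = coeff (P - Q) k"
  have indc: "vs.independent {c}"
    using nonzero c_def vs.independent_insert vs.independent_empty vs.span_empty by auto
  define B where "B = vs.extend_basis {c}"
  have cB: "c \<in> B" and indB: "vs.independent B" and spB: "vs.span B = UNIV"
    using vs.extend_basis_superset[OF indc] vs.independent_extend_basis[OF indc]
      vs.span_extend_basis[OF indc] B_def by auto
  define \<phi> where "\<phi> v = vs.representation B v c" for v
  have \<phi>: "additive \<phi>"
    by (simp add: additive_def \<phi>_def vs.representation_add[OF indB] spB)
  have \<phi>_scale: "\<phi> (s z x) = z * \<phi> x" for z x
    by (simp add: \<phi>_def vs.representation_scale[OF indB] spB)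
  have mult: "additive ((*) z)" for z :: complex
    by (simp add: additive_def distrib_left)
  have "poly (map_poly \<phi> (P - Q)) z = 0" for z
  proof -
    have "poly (map_poly \<phi> (P - Q)) z = \<phi> (op_eval (s z) (P - Q))"
      unfolding op_eval_mult[symmetric]
      by (rule op_eval_map_poly) (simp_all add: additive_scale[OF s] \<phi> \<phi>_scale mult)
    also have "\<dots> = 0"
      using eq[of z] by (simp add: peval_eq_op_eval[OF s] additive_scale[OF s] additive.zero[OF \<phi>])
    finally show ?thesis .
  qed
  then have "map_poly \<phi> (P - Q) = 0"
    using poly_all_0_iff_0 by blast
  then have "\<phi> c = 0"
    using coeff_map_poly[of \<phi> "P - Q" k] additive.zero[OF \<phi>] c_def by simp
  moreover have "\<phi> c = 1"
    by (simp add: \<phi>_def vs.representation_basis[OF indB cB])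
  ultimately show False by simp
qed

section \<open>The substitution \<open>\<lambda> \<mapsto> -\<partial>-\<lambda>\<close>\<close>

text \<open>Substitution of an operator \<open>F\<close> on \<open>M[\<lambda>]\<close> for \<open>\<lambda>\<close>.\<close>

definition subst_op :: "('m::ab_group_add poly \<Rightarrow> 'm poly) \<Rightarrow> 'm poly \<Rightarrow> 'm poly" where
  "subst_op F P = op_eval F (map_poly (\<lambda>c. [:c:]) P)"

lemma additive_const_poly: "additive (\<lambda>c. [:c:])"
  by (simp add: additive_def)

lemma additive_subst_op: "additive F \<Longrightarrow> additive (subst_op F)"
  by (rule additive.intro) (simp add: subst_op_def map_poly_additive[OF additive_const_poly])

lemma subst_op_pCons:
  "additive F \<Longrightarrow> subst_op F (pCons a P) = [:a:] + F (subst_op F P)"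
  by (simp add: subst_op_def map_poly_pCons op_eval_pCons)

lemma op_eval_subst_op:
  assumes "additive E" "additive F" "additive G"
    and "\<And>Q. op_eval E (F Q) = G (op_eval E Q)"
  shows "op_eval E (subst_op F P) = op_eval G P"
proof -
  have "op_eval E (subst_op F P) = op_eval G (map_poly (op_eval E) (map_poly (\<lambda>c. [:c:]) P))"
    unfolding subst_op_def
    by (rule op_eval_map_poly[symmetric]) (simp_all add: assms additive_op_eval)
  also have "\<dots> = op_eval G P"
    using assms(1) by (simp add: map_poly_map_poly o_def)
  finally show ?thesis .
qed

lemma neg_subst_eq_subst_op: "neg_subst D = subst_op (neg_shift D)"
  by (simp add: fun_eq_iff neg_subst_def subst_op_def op_eval_def degree_map_poly coeff_map_poly)

lemma additive_neg_shift: "additive D \<Longrightarrow> additive (neg_shift D)"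
  by (rule additive.intro)
     (simp add: neg_shift_def Dpoly_def map_poly_additive)

lemma additive_neg_subst: "additive D \<Longrightarrow> additive (neg_subst D)"
  by (simp add: neg_subst_eq_subst_op additive_subst_op additive_neg_shift)

lemma neg_subst_simps [simp]:
  assumes "additive D"
  shows "neg_subst D 0 = 0"
    and "neg_subst D (P + Q) = neg_subst D P + neg_subst D Q"
    and "neg_subst D (- P) = - neg_subst D P"
    and "neg_subst D (P - Q) = neg_subst D P - neg_subst D Q"
  using additive_neg_subst[OF assms]
  by (simp_all add: additive.add additive.minus additive.diff additive.zero)

lemma neg_subst_pCons:
  "additive D \<Longrightarrow> neg_subst D (pCons a P) = [:a:] + neg_shift D (neg_subst D P)"
  by (simp add: neg_subst_eq_subst_op subst_op_pCons additive_neg_shift)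

lemma neg_subst_map_poly:
  assumes "additive h" "additive D" "additive D'" "\<And>x. h (D x) = D' (h x)"
  shows "neg_subst D' (map_poly h P) = map_poly h (neg_subst D P)"
proof -
  have shift: "map_poly h (neg_shift D Q) = neg_shift D' (map_poly h Q)" for Q
    using assms
    by (simp add: neg_shift_def Dpoly_def lam_mul_def map_poly_additive map_poly_pCons
        map_poly_map_poly additive.zero o_def)
  have "map_poly h (neg_subst D P)
      = op_eval (neg_shift D') (map_poly (map_poly h) (map_poly (\<lambda>c. [:c:]) P))"
    unfolding neg_subst_eq_subst_op subst_op_def
    by (rule op_eval_map_poly[symmetric])
       (simp_all add: assms additive_neg_shift additive_map_poly shift)
  also have "\<dots> = neg_subst D' (map_poly h P)"
    by (simp add: neg_subst_eq_subst_op subst_op_def map_poly_map_poly o_def map_poly_pCons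
        additive.zero[OF assms(1)])
  finally show ?thesis ..
qed

lemma neg_subst_lam_mul:
  "additive D \<Longrightarrow> neg_subst D (lam_mul P) = neg_shift D (neg_subst D P)"
  by (simp add: lam_mul_def neg_subst_pCons)

lemma neg_subst_Dpoly:
  "additive D \<Longrightarrow> neg_subst D (Dpoly D P) = Dpoly D (neg_subst D P)"
  unfolding Dpoly_def by (rule neg_subst_map_poly) auto

lemma neg_subst_neg_shift:
  "additive D \<Longrightarrow> neg_subst D (neg_shift D P) = lam_mul (neg_subst D P)"
  by (simp add: neg_shift_def neg_subst_Dpoly neg_subst_lam_mul)

lemma neg_shift_0 [simp]: "neg_shift D 0 = 0"
  by (simp add: neg_shift_def Dpoly_def lam_mul_def)

lemma neg_subst_neg_subst:
  assumes "additive D"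
  shows "neg_subst D (neg_subst D P) = P"
proof (induction P)
  case (pCons a P)
  then show ?case
    using assms by (simp add: neg_subst_pCons neg_subst_neg_shift lam_mul_def)
qed (simp add: assms)

text \<open>The operator \<open>-\<partial>-E\<close> on \<open>M\<close>; \<open>neg_shift\<close> \<open>D\<close> is \<open>neg_shift_op (Dpoly D) lam_mul\<close>.\<close>

definition neg_shift_op :: "('m::ab_group_add \<Rightarrow> 'm) \<Rightarrow> ('m \<Rightarrow> 'm) \<Rightarrow> 'm \<Rightarrow> 'm" where
  "neg_shift_op D E x = - D x - E x"

lemma additive_neg_shift_op: "additive D \<Longrightarrow> additive E \<Longrightarrow> additive (neg_shift_op D E)"
  by (simp add: additive_def neg_shift_op_def additive.add)

lemma op_eval_neg_subst:
  assumes "additive D" "additive E" "\<And>x. D (E x) = E (D x)"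
  shows "op_eval E (neg_subst D P) = op_eval (neg_shift_op D E) P"
proof -
  have "op_eval E (Dpoly D Q) = D (op_eval E Q)" for Q
    unfolding Dpoly_def by (rule op_eval_map_poly) (simp_all add: assms)
  then show ?thesis
    unfolding neg_subst_eq_subst_op
    by (intro op_eval_subst_op)
       (simp_all add: assms additive_neg_shift additive_neg_shift_op neg_shift_def neg_shift_op_def)
qed

text \<open>\<open>P(\<lambda>) \<mapsto> P(\<lambda> + l)\<close>\<close>

definition poly_shift :: "(complex \<Rightarrow> 'm::ab_group_add \<Rightarrow> 'm) \<Rightarrow> complex \<Rightarrow> 'm poly \<Rightarrow> 'm poly" where
  "poly_shift s l = subst_op (\<lambda>Q. lam_mul Q + map_poly (s l) Q)"

lemma op_eval_poly_shift:
  assumes s: "module s" and E: "additive E" "\<And>x. E (s l x) = s l (E x)"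
  shows "op_eval E (poly_shift s l P) = op_eval (\<lambda>x. s l x + E x) P"
proof -
  have scale: "op_eval E (map_poly (s l) Q) = s l (op_eval E Q)" for Q
    by (rule op_eval_map_poly) (simp_all add: E additive_scale[OF s])
  have shift: "additive (\<lambda>Q. lam_mul Q + map_poly (s l) Q)"
    by (rule additive.intro)
       (simp add: map_poly_additive additive_scale[OF s] add_ac)
  have "additive (\<lambda>x. s l x + E x)"
    by (rule additive.intro)
       (simp add: additive.add[OF E(1)] additive.add[OF additive_scale[OF s]] add_ac)
  then show ?thesis
    unfolding poly_shift_def
    by (intro op_eval_subst_op E(1) shift) (simp_all add: E(1) scale add.commute)
qed

text \<open>An identity holding for every complex value of \<open>\<lambda>\<close> persists when \<open>\<lambda>\<close> is replaced by
  an operator commuting with the scalars.\<close>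

lemma op_eval_transfer:
  fixes s :: "complex \<Rightarrow> 'm::ab_group_add \<Rightarrow> 'm"
  assumes s: "module s" and E: "additive E" "\<And>x. E (s l x) = s l (E x)"
    and eq: "\<And>\<nu>. op_eval (s \<nu>) A = op_eval (s \<nu>) B + op_eval (s (l + \<nu>)) C"
  shows "op_eval E A = op_eval E B + op_eval (\<lambda>x. s l x + E x) C"
proof -
  have "A = B + poly_shift s l C"
  proof (rule poly_eq_if_peval_eq[OF s])
    fix \<nu>
    have "(\<lambda>x. s l x + s \<nu> x) = s (l + \<nu>)"
      by (simp add: fun_eq_iff module.scale_left_distrib[OF s])
    then show "peval s A \<nu> = peval s (B + poly_shift s l C) \<nu>"
      by (simp add: peval_eq_op_eval[OF s] additive_scale[OF s] op_eval_poly_shift[OF s]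
          module.scale_left_commute[OF s] eq)
  qed
  moreover have "op_eval E (poly_shift s l C) = op_eval (\<lambda>x. s l x + E x) C"
    using s E(1) by (rule op_eval_poly_shift) (rule E(2))
  ultimately show ?thesis
    using E(1) by simp
qed

section \<open>Lie conformal algebras\<close>

lemma cdmoduleD:
  assumes "cdmodule s D"
  shows "module s" "additive D" "D (s c x) = s c (D x)"
  using assms by (auto simp: cdmodule_def module_hom_iff additive_def)

lemma cdlinearD:
  assumes "cdlinear s D s' D' f"
  shows "additive f" "f (s c x) = s' c (f x)" "f (D x) = D' (f x)"
  using assms by (auto simp: cdlinear_def module_hom_iff additive_def)

lemma bilinear_lam_additive:
  assumes "bilinear_lam sa sb sc f"
  shows "additive (\<lambda>x. f x y)" "additive (f x)"
  using assms by (auto simp: bilinear_lam_def additive_def)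

lemma bilinear_lam_simps:
  assumes "bilinear_lam sa sb sc f"
  shows "f (x + x') y = f x y + f x' y" "f 0 y = 0" "f (- x) y = - f x y"
      "f (x - x') y = f x y - f x' y"
    and "f x (y + y') = f x y + f x y'" "f x 0 = 0" "f x (- y) = - f x y"
      "f x (y - y') = f x y - f x y'"
proof -
  interpret left: additive "\<lambda>x. f x y"
    by (rule bilinear_lam_additive(1)[OF assms])
  interpret right: additive "f x"
    by (rule bilinear_lam_additive(2)[OF assms])
  show "f (x + x') y = f x y + f x' y" "f 0 y = 0" "f (- x) y = - f x y"
      "f (x - x') y = f x y - f x' y" "f x (y + y') = f x y + f x y'" "f x 0 = 0"
      "f x (- y) = - f x y" "f x (y - y') = f x y - f x y'"
    using left.add left.zero left.minus left.diff right.add right.zero right.minus right.diff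
    by simp_all
qed

lemma bilinear_lam_scale:
  assumes "bilinear_lam sa sb sc f"
  shows "f (sa c x) y = map_poly (sc c) (f x y)" "f x (sb c y) = map_poly (sc c) (f x y)"
  using assms by (simp_all add: bilinear_lam_def spoly_def)

lemma cdmodule_op_eval_commute:
  assumes "cdmodule s D" "additive E" "\<And>x. D (E x) = E (D x)" "\<And>c x. s c (E x) = E (s c x)"
  shows "op_eval E (Dpoly D P) = D (op_eval E P)"
    and "op_eval E (map_poly (s c) P) = s c (op_eval E P)"
proof -
  show "op_eval E (Dpoly D P) = D (op_eval E P)"
    unfolding Dpoly_def using assms(2,2) cdmoduleD(2)[OF assms(1)] assms(3)
    by (rule op_eval_map_poly)
  show "op_eval E (map_poly (s c) P) = s c (op_eval E P)"
    using assms(2,2) additive_scale[OF cdmoduleD(1)[OF assms(1)]] assms(4)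
    by (rule op_eval_map_poly)
qed

lemma op_eval_sesquilinear_right:
  assumes D: "cdmodule s D" and f: "bilinear_lam sa s s f" "sesquilinear Da D f"
  shows "op_eval (s l) (f p (neg_shift_op D (s \<mu>) x))
    = neg_shift_op D (s (l + \<mu>)) (op_eval (s l) (f p x))"
proof -
  note m = cdmoduleD[OF D]
  have comm: "op_eval (s l) (Dpoly D P) = D (op_eval (s l) P)"
    "op_eval (s l) (map_poly (s \<mu>) P) = s \<mu> (op_eval (s l) P)" for P
    by (rule cdmodule_op_eval_commute[OF D additive_scale[OF m(1)]];
        simp add: m module.scale_left_commute[OF m(1)])+
  show ?thesis
    using f
    by (simp add: neg_shift_op_def bilinear_lam_simps[OF f(1)] bilinear_lam_scale[OF f(1)]
        sesquilinear_def comm additive_scale[OF m(1)] module.scale_left_distrib[OF m(1)])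
qed

lemma op_eval_sesquilinear_left:
  assumes s: "module s" and f: "bilinear_lam sa sb s f" "sesquilinear Da Db f"
  shows "op_eval (s \<nu>) (f (neg_shift_op Da (sa l) x) y) = s (\<nu> - l) (op_eval (s \<nu>) (f x y))"
proof -
  have "op_eval (s \<nu>) (map_poly (s l) P) = s l (op_eval (s \<nu>) P)" for P
    by (rule op_eval_map_poly) (simp_all add: additive_scale[OF s] module.scale_left_commute[OF s])
  then show ?thesis
    using f
    by (simp add: neg_shift_op_def bilinear_lam_simps[OF f(1)] bilinear_lam_scale[OF f(1)]
        sesquilinear_def additive_scale[OF s] module.scale_left_diff_distrib[OF s])
qed

definition conformal_jacobi ::
  "(complex \<Rightarrow> 'a::ab_group_add \<Rightarrow> 'a) \<Rightarrow> ('a \<Rightarrow> 'a \<Rightarrow> 'a poly) \<Rightarrow> 'a \<Rightarrow> 'a \<Rightarrow> 'a \<Rightarrow> bool" where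
  "conformal_jacobi s br a b c \<longleftrightarrow>
     (\<forall>l m. peval s (br a (peval s (br b c) m)) l =
        peval s (br (peval s (br a b) l) c) (l + m) + peval s (br b (peval s (br a c) l)) m)"

lemma LCA_iff:
  "LCA s D br \<longleftrightarrow> cdmodule s D \<and> bilinear_lam s s s br \<and> sesquilinear D D br \<and>
     (\<forall>a b. br a b = - neg_subst D (br b a)) \<and> (\<forall>a b c. conformal_jacobi s br a b c)"
  by (simp add: LCA_def conformal_jacobi_def)

lemma peval_bracket_skew:
  assumes D: "cdmodule s D" and br: "bilinear_lam s s s br" "sesquilinear D D br"
    and skew: "\<And>a b. br a b = - neg_subst D (br b a)"
  shows "peval s (br (peval s (br b a) l) c) (l + m) =
    - peval s (br (peval s (br a b) m) c) (l + m)"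
proof -
  note s = cdmoduleD(1)[OF D] and D' = cdmoduleD(2,3)[OF D]
  define \<phi> where "\<phi> x = op_eval (s (l + m)) (br x c)" for x
  have \<phi>: "additive \<phi>"
    by (rule additive.intro) (simp add: \<phi>_def bilinear_lam_simps[OF br(1)] additive_scale[OF s])
  have \<phi>_scale: "\<phi> (s m x) = s m (\<phi> x)" for x
    unfolding \<phi>_def bilinear_lam_scale[OF br(1)]
    by (rule op_eval_map_poly) (simp_all add: additive_scale[OF s] module.scale_left_commute[OF s])
  have \<phi>_neg_shift: "\<phi> (neg_shift_op D (s l) x) = s m (\<phi> x)" for x
    using op_eval_sesquilinear_left[OF s br, of "l + m" l x c] by (simp add: \<phi>_def)
  have "\<phi> (op_eval (neg_shift_op D (s l)) P) = op_eval (s m) (map_poly \<phi> P)" for P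
    by (rule op_eval_map_poly[symmetric])
       (simp_all add: \<phi> \<phi>_neg_shift additive_neg_shift_op D' additive_scale[OF s])
  also have "op_eval (s m) (map_poly \<phi> P) = \<phi> (op_eval (s m) P)" for P
    by (rule op_eval_map_poly) (simp_all add: \<phi> \<phi>_scale additive_scale[OF s])
  finally have \<phi>_eval: "\<phi> (op_eval (neg_shift_op D (s l)) P) = \<phi> (op_eval (s m) P)" for P .
  have "peval s (br b a) l = - op_eval (neg_shift_op D (s l)) (br a b)"
    by (simp add: peval_eq_op_eval[OF s] skew[of b a] op_eval_neg_subst D' additive_scale[OF s])
  then show ?thesis
    by (simp add: peval_eq_op_eval[OF s] additive.minus[OF \<phi>, unfolded \<phi>_def]
        \<phi>_eval[unfolded \<phi>_def])
qed

lemma conformal_jacobi_swap: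
  assumes "cdmodule s D" "bilinear_lam s s s br" "sesquilinear D D br"
    and "\<And>a b. br a b = - neg_subst D (br b a)"
    and "conformal_jacobi s br a b c"
  shows "conformal_jacobi s br b a c"
  unfolding conformal_jacobi_def
proof (intro allI)
  fix l m
  have "peval s (br a (peval s (br b c) l)) m
      = peval s (br (peval s (br a b) m) c) (l + m) + peval s (br b (peval s (br a c) m)) l"
    using assms(5) by (simp add: conformal_jacobi_def add.commute)
  then show "peval s (br b (peval s (br a c) m)) l
      = peval s (br (peval s (br b a) l) c) (l + m) + peval s (br a (peval s (br b c) l)) m"
    using peval_bracket_skew[OF assms(1-4), of b a l c m] by (simp add: algebra_simps)
qed

lemma conformal_jacobi_add:
  assumes s: "module s" and br: "bilinear_lam s s s br"
  shows "conformal_jacobi s br a b c \<Longrightarrow> conformal_jacobi s br a' b c \<Longrightarrow>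
      conformal_jacobi s br (a + a') b c"
    and "conformal_jacobi s br a b c \<Longrightarrow> conformal_jacobi s br a b' c \<Longrightarrow>
      conformal_jacobi s br a (b + b') c"
    and "conformal_jacobi s br a b c \<Longrightarrow> conformal_jacobi s br a b c' \<Longrightarrow>
      conformal_jacobi s br a b (c + c')"
  using s
  by (simp_all add: conformal_jacobi_def bilinear_lam_simps[OF br] peval_eq_op_eval
      additive_scale add_ac)

lemma conformal_jacobi_prodI:
  fixes s :: "complex \<Rightarrow> 'a::ab_group_add \<times> 'b::ab_group_add \<Rightarrow> 'a \<times> 'b"
  defines "G \<equiv> range (\<lambda>p. (p, 0)) \<union> range (Pair 0)"
  assumes s: "module s" and br: "bilinear_lam s s s br"
    and J: "\<And>a b c. a \<in> G \<Longrightarrow> b \<in> G \<Longrightarrow> c \<in> G \<Longrightarrow> conformal_jacobi s br a b c"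
  shows "conformal_jacobi s br a b c"
proof -
  have split: "x = (fst x, 0) + (0, snd x)" "(fst x, 0) \<in> G" "(0, snd x) \<in> G" for x :: "'a \<times> 'b"
    by (auto simp: G_def)
  note add = conformal_jacobi_add[OF s br]
  have Jc: "conformal_jacobi s br a' b' c" if "a' \<in> G" "b' \<in> G" for a' b'
    using add(3)[OF J J] that split by metis
  have Jb: "conformal_jacobi s br a' b c" if "a' \<in> G" for a'
    using add(2)[OF Jc Jc] that split by metis
  show ?thesis
    using add(1)[OF Jb Jb] split by metis
qed

lemma neg_shift_op_commute:
  assumes "cdmodule s D"
  shows "neg_shift_op D (s z) (s c x) = s c (neg_shift_op D (s z) x)"
    and "neg_shift_op D (s z) (D x) = D (neg_shift_op D (s z) x)"
  using cdmoduleD[OF assms]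
  by (simp_all add: neg_shift_op_def additive.minus additive.diff module.scale_left_commute
      module.scale_right_diff_distrib module.scale_minus_right)

section \<open>Direct sums\<close>

lemma coeff_pair_poly: "coeff (pair_poly P Q) k = (coeff P k, coeff Q k)"
  by (simp add: pair_poly_def coeff_map_poly zero_prod_def)

lemma pair_poly_simps [simp]:
  "pair_poly 0 0 = 0"
  "pair_poly P Q + pair_poly P' Q' = pair_poly (P + P') (Q + Q')"
  "- pair_poly P Q = pair_poly (- P) (- Q)"
  "pair_poly P Q - pair_poly P' Q' = pair_poly (P - P') (Q - Q')"
  "lam_mul (pair_poly P Q) = pair_poly (lam_mul P) (lam_mul Q)"
  by (simp_all add: poly_eq_iff coeff_pair_poly lam_mul_def coeff_pCons zero_prod_def
      split: nat.split)

lemma pair_poly_eq_iff [simp]: "pair_poly P Q = pair_poly P' Q' \<longleftrightarrow> P = P' \<and> Q = Q'"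
  by (auto simp: poly_eq_iff coeff_pair_poly)

lemma map_poly_pair_poly:
  "f 0 = 0 \<Longrightarrow> g 0 = 0 \<Longrightarrow>
    map_poly (map_prod f g) (pair_poly P Q) = pair_poly (map_poly f P) (map_poly g Q)"
  by (simp add: poly_eq_iff coeff_pair_poly coeff_map_poly zero_prod_def)

lemma additive_map_prod: "additive f \<Longrightarrow> additive g \<Longrightarrow> additive (map_prod f g)"
  by (simp add: additive_def additive.add)

lemma additive_prod_embeddings: "additive (\<lambda>x. (x, 0))" "additive (Pair 0)"
  by (simp_all add: additive_def)

lemma op_eval_pair_poly:
  assumes "additive E" "additive E'"
  shows "op_eval (map_prod E E') (pair_poly P Q) = (op_eval E P, op_eval E' Q)"
proof -
  have "op_eval (map_prod E E') (map_poly (\<lambda>x. (x, 0)) P) = (op_eval E P, 0)"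
    by (rule op_eval_map_poly)
       (simp_all add: assms additive_map_prod additive_prod_embeddings additive.zero)
  moreover have "op_eval (map_prod E E') (map_poly (Pair 0) Q) = (0, op_eval E' Q)"
    by (rule op_eval_map_poly)
       (simp_all add: assms additive_map_prod additive_prod_embeddings additive.zero)
  ultimately show ?thesis
    using assms by (simp add: pair_poly_def additive_map_prod)
qed

lemma neg_subst_pair_poly:
  assumes "additive D" "additive D'"
  shows "neg_subst (map_prod D D') (pair_poly P Q) = pair_poly (neg_subst D P) (neg_subst D' Q)"
proof -
  have
    "neg_subst (map_prod D D') (map_poly (\<lambda>x. (x, 0)) P) = map_poly (\<lambda>x. (x, 0)) (neg_subst D P)"
    by (rule neg_subst_map_poly)
       (simp_all add: assms additive_map_prod additive_prod_embeddings additive.zero)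
  moreover have
    "neg_subst (map_prod D D') (map_poly (Pair 0) Q) = map_poly (Pair 0) (neg_subst D' Q)"
    by (rule neg_subst_map_poly)
       (simp_all add: assms additive_map_prod additive_prod_embeddings additive.zero)
  ultimately show ?thesis
    using assms by (simp add: pair_poly_def additive_map_prod)
qed

lemma module_prod:
  assumes "module s" "module s'"
  shows "module (\<lambda>c. map_prod (s c) (s' c))"
proof -
  interpret m: module s by fact
  interpret m': module s' by fact
  show ?thesis
    by standard (simp_all add: map_prod_def split_beta m.scale_right_distrib m.scale_left_distrib
        m'.scale_right_distrib m'.scale_left_distrib)
qed

lemma cdmodule_prod:
  assumes "cdmodule s D" "cdmodule s' D'"
  shows "cdmodule (\<lambda>c. map_prod (s c) (s' c)) (map_prod D D')"
  unfolding cdmodule_def module_hom_iff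
  using cdmoduleD[OF assms(1)] cdmoduleD[OF assms(2)]
    module_prod[OF cdmoduleD(1)[OF assms(1)] cdmoduleD(1)[OF assms(2)]]
  by (simp add: map_prod_def split_beta additive.add)

lemma cdlinear_map_prod:
  assumes "cdlinear s D s2 D2 f" "cdlinear s' D' s2' D2' g"
  shows "cdlinear (\<lambda>c. map_prod (s c) (s' c)) (map_prod D D')
    (\<lambda>c. map_prod (s2 c) (s2' c)) (map_prod D2 D2') (map_prod f g)"
  using assms unfolding cdlinear_def module_hom_iff
  by (auto intro: module_prod)

section \<open>The semidirect sum\<close>

definition semidirect_bracket ::
  "('b::ab_group_add \<Rightarrow> 'b) \<Rightarrow> ('a::ab_group_add \<Rightarrow> 'a \<Rightarrow> 'a poly) \<Rightarrow> ('a \<Rightarrow> 'b \<Rightarrow> 'b poly) \<Rightarrow>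
    ('b \<Rightarrow> 'b \<Rightarrow> 'b poly) \<Rightarrow> 'a \<times> 'b \<Rightarrow> 'a \<times> 'b \<Rightarrow> ('a \<times> 'b) poly" where
  "semidirect_bracket D1 br0 rho br1 =
     (\<lambda>(p, m) (q, n). pair_poly (br0 p q) (rho p n - neg_subst D1 (rho q m) + br1 m n))"

lemma semidirect_bracket_Pair [simp]:
  "semidirect_bracket D1 br0 rho br1 (p, m) (q, n) =
     pair_poly (br0 p q) (rho p n - neg_subst D1 (rho q m) + br1 m n)"
  by (simp add: semidirect_bracket_def)

lemma nijenhuis_semidirect_bracket:
  assumes N0: "nijenhuis br0 N0" and N1: "nijenhuis br1 N1"
    and rho: "\<And>p m. rho (N0 p) (N1 m) =
      map_poly N1 (rho (N0 p) m + rho p (N1 m) - map_poly N1 (rho p m))"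
    and add: "additive N0" "additive N1" "additive D1" and comm: "\<And>x. N1 (D1 x) = D1 (N1 x)"
  shows "nijenhuis (semidirect_bracket D1 br0 rho br1) (map_prod N0 N1)"
  unfolding nijenhuis_def
proof (intro allI)
  fix a b :: "'a \<times> 'b"
  obtain p m q n where ab: "a = (p, m)" "b = (q, n)"
    by fastforce
  have "neg_subst D1 (map_poly N1 X) = map_poly N1 (neg_subst D1 X)" for X
    by (rule neg_subst_map_poly) (simp_all add: add comm)
  then show "semidirect_bracket D1 br0 rho br1 (map_prod N0 N1 a) (map_prod N0 N1 b) =
      map_poly (map_prod N0 N1) (semidirect_bracket D1 br0 rho br1 (map_prod N0 N1 a) b +
        semidirect_bracket D1 br0 rho br1 a (map_prod N0 N1 b) -
        map_poly (map_prod N0 N1) (semidirect_bracket D1 br0 rho br1 a b))"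
    using N0 N1 add
    by (simp add: ab nijenhuis_def rho map_poly_pair_poly map_poly_additive additive.zero
        algebra_simps)
qed

text \<open>A crossed module of Lie conformal algebras without the Nijenhuis operators. That \<open>t\<close>
  preserves brackets is not assumed: it follows from \<open>t_rho\<close> and \<open>rho_t\<close>.\<close>

locale conformal_crossed_module =
  fixes s0 :: "complex \<Rightarrow> 'a::ab_group_add \<Rightarrow> 'a" and D0 :: "'a \<Rightarrow> 'a"
    and br0 :: "'a \<Rightarrow> 'a \<Rightarrow> 'a poly"
    and s1 :: "complex \<Rightarrow> 'b::ab_group_add \<Rightarrow> 'b" and D1 :: "'b \<Rightarrow> 'b"
    and br1 :: "'b \<Rightarrow> 'b \<Rightarrow> 'b poly"
    and t :: "'b \<Rightarrow> 'a" and rho :: "'a \<Rightarrow> 'b \<Rightarrow> 'b poly"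
  assumes LCA0: "LCA s0 D0 br0" and LCA1: "LCA s1 D1 br1"
    and rep: "conf_rep s0 D0 br0 s1 D1 rho"
    and t_cdlinear: "cdlinear s1 D1 s0 D0 t"
    and t_rho: "map_poly t (rho p m) = br0 p (t m)"
    and rho_t: "rho (t m) n = br1 m n"
begin

lemma cdmodule0: "cdmodule s0 D0"
  and bilinear0: "bilinear_lam s0 s0 s0 br0"
  and sesquilinear0: "sesquilinear D0 D0 br0"
  and skew0: "br0 p q = - neg_subst D0 (br0 q p)"
  and jacobi0: "conformal_jacobi s0 br0 p q r"
  using LCA0 unfolding LCA_iff by blast+

lemma cdmodule1: "cdmodule s1 D1"
  and bilinear1: "bilinear_lam s1 s1 s1 br1"
  and sesquilinear1: "sesquilinear D1 D1 br1"
  and skew1: "br1 m n = - neg_subst D1 (br1 n m)"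
  and jacobi1: "conformal_jacobi s1 br1 m n k"
  using LCA1 unfolding LCA_iff by blast+

lemma bilinear_rho: "bilinear_lam s0 s1 s1 rho"
  and sesquilinear_rho: "sesquilinear D0 D1 rho"
  and rep_identity: "peval s1 (rho p (peval s1 (rho q m) \<mu>)) l -
      peval s1 (rho q (peval s1 (rho p m) l)) \<mu> = peval s1 (rho (peval s0 (br0 p q) l) m) (l + \<mu>)"
  using rep by (simp_all add: conf_rep_def)

lemmas module0 = cdmoduleD(1)[OF cdmodule0] and module1 = cdmoduleD(1)[OF cdmodule1]

lemma additive_ops [simp]:
  "additive D0" "additive D1" "additive t" "additive (s0 z)" "additive (s1 z)"
  "additive (neg_shift_op D0 (s0 z))" "additive (neg_shift_op D1 (s1 z))"
  using cdmoduleD(2)[OF cdmodule0] cdmoduleD(2)[OF cdmodule1] cdlinearD(1)[OF t_cdlinear]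
    additive_scale[OF module0] additive_scale[OF module1]
  by (simp_all add: additive_neg_shift_op)

lemma zero_ops [simp]: "D0 0 = 0" "D1 0 = 0" "s0 c 0 = 0" "s1 c 0 = 0"
  by (simp_all add: additive.zero)

lemmas [simp] = bilinear_lam_simps[OF bilinear0] bilinear_lam_simps[OF bilinear1]
  bilinear_lam_simps[OF bilinear_rho] peval_eq_op_eval[OF module0] peval_eq_op_eval[OF module1]

lemma op_eval_neg_subst1 [simp]:
  "op_eval (s1 z) (neg_subst D1 P) = op_eval (neg_shift_op D1 (s1 z)) P"
  by (rule op_eval_neg_subst) (simp_all add: cdmoduleD(3)[OF cdmodule1])

lemma t_commute:
  "t (s1 c x) = s0 c (t x)" "t (neg_shift_op D1 (s1 z) x) = neg_shift_op D0 (s0 z) (t x)"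
  using cdlinearD[OF t_cdlinear]
  by (simp_all add: neg_shift_op_def additive.minus[OF cdlinearD(1)[OF t_cdlinear]]
      additive.diff[OF cdlinearD(1)[OF t_cdlinear]])

lemma op_eval_map_t:
  "op_eval (s0 z) (map_poly t P) = t (op_eval (s1 z) P)"
  "op_eval (neg_shift_op D0 (s0 z)) (map_poly t P) = t (op_eval (neg_shift_op D1 (s1 z)) P)"
  by (rule op_eval_map_poly; simp add: t_commute)+

lemma rep_jacobi:
  "op_eval (s1 l) (rho p (op_eval (s1 \<mu>) (rho q k))) =
    op_eval (s1 (l + \<mu>)) (rho (op_eval (s0 l) (br0 p q)) k) +
    op_eval (s1 \<mu>) (rho q (op_eval (s1 l) (rho p k)))"
  using rep_identity[of p q k \<mu> l] by (simp add: algebra_simps)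

lemma rep_jacobi_neg_shift:
  "op_eval (s1 l) (rho p (op_eval (neg_shift_op D1 (s1 \<mu>)) (rho r n))) =
    op_eval (neg_shift_op D1 (s1 (l + \<mu>))) (rho r (op_eval (s1 l) (rho p n))) +
    op_eval (neg_shift_op D1 (s1 \<mu>)) (rho (op_eval (s0 l) (br0 p r)) n)"
proof -
  define \<phi> where "\<phi> x = op_eval (s1 l) (rho p x)" for x
  have \<phi>: "additive \<phi>"
    by (rule additive.intro) (simp add: \<phi>_def)
  have \<phi>_scale: "\<phi> (s1 c x) = s1 c (\<phi> x)" for c x
    unfolding \<phi>_def bilinear_lam_scale[OF bilinear_rho]
    by (rule cdmodule_op_eval_commute(2)[OF cdmodule1])
       (simp_all add: cdmoduleD(3)[OF cdmodule1] module.scale_left_commute[OF module1])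
  have \<phi>_neg_shift: "\<phi> (neg_shift_op D1 (s1 \<mu>) x) = neg_shift_op D1 (s1 (l + \<mu>)) (\<phi> x)" for x
    unfolding \<phi>_def by (rule op_eval_sesquilinear_right[OF cdmodule1 bilinear_rho sesquilinear_rho])
  have "op_eval (neg_shift_op D1 (s1 (l + \<mu>))) (map_poly \<phi> (rho r n)) =
      op_eval (neg_shift_op D1 (s1 (l + \<mu>))) (rho r (\<phi> n)) +
      op_eval (\<lambda>x. s1 l x + neg_shift_op D1 (s1 (l + \<mu>)) x) (rho (op_eval (s0 l) (br0 p r)) n)"
  proof (rule op_eval_transfer[OF module1])
    fix \<nu>
    have "op_eval (s1 \<nu>) (map_poly \<phi> (rho r n)) = \<phi> (op_eval (s1 \<nu>) (rho r n))"
      by (rule op_eval_map_poly) (simp_all add: \<phi> \<phi>_scale)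
    then show "op_eval (s1 \<nu>) (map_poly \<phi> (rho r n)) =
        op_eval (s1 \<nu>) (rho r (\<phi> n)) + op_eval (s1 (l + \<nu>)) (rho (op_eval (s0 l) (br0 p r)) n)"
      using rep_jacobi[of l p \<nu> r n] by (simp add: \<phi>_def add.commute)
  qed (simp_all add: neg_shift_op_commute[OF cdmodule1])
  moreover have "op_eval (neg_shift_op D1 (s1 (l + \<mu>))) (map_poly \<phi> (rho r n)) =
      \<phi> (op_eval (neg_shift_op D1 (s1 \<mu>)) (rho r n))"
    by (rule op_eval_map_poly) (simp_all add: \<phi> \<phi>_neg_shift)
  moreover have "(\<lambda>x. s1 l x + neg_shift_op D1 (s1 (l + \<mu>)) x) = neg_shift_op D1 (s1 \<mu>)"
    by (simp add: fun_eq_iff neg_shift_op_def module.scale_left_distrib[OF module1])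
  ultimately show ?thesis
    by (simp add: \<phi>_def)
qed

lemma rho_derivation:
  "op_eval (s1 l) (rho p (op_eval (s1 \<mu>) (br1 n k))) =
    op_eval (s1 (l + \<mu>)) (br1 (op_eval (s1 l) (rho p n)) k) +
    op_eval (s1 \<mu>) (br1 n (op_eval (s1 l) (rho p k)))"
  using rep_jacobi[of l p \<mu> "t n" k]
  by (simp add: rho_t t_rho[symmetric] op_eval_map_t t_commute)

lemma op_eval_br0_t_left:
  "op_eval (s0 l) (br0 (t m) q) = - t (op_eval (neg_shift_op D1 (s1 l)) (rho q m))"
proof -
  have "op_eval (s0 l) (br0 (t m) q) = - op_eval (neg_shift_op D0 (s0 l)) (br0 q (t m))"
    by (simp add: skew0[of "t m" q] op_eval_neg_subst cdmoduleD(3)[OF cdmodule0])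
  then show ?thesis
    by (simp add: t_rho[symmetric] op_eval_map_t t_commute)
qed

lemma op_eval_br1_skew:
  "op_eval (s1 z) (br1 m n) = - op_eval (neg_shift_op D1 (s1 z)) (br1 n m)"
  by (simp add: skew1[of m n])

lemma br1_jacobi_neg_shift:
  "op_eval (s1 l) (br1 m (op_eval (neg_shift_op D1 (s1 \<mu>)) (rho r n))) =
    op_eval (neg_shift_op D1 (s1 (l + \<mu>))) (rho r (op_eval (s1 l) (br1 m n))) +
    op_eval (s1 \<mu>) (br1 n (op_eval (neg_shift_op D1 (s1 l)) (rho r m)))"
  using rep_jacobi_neg_shift[of l "t m" \<mu> r n]
  by (simp add: rho_t op_eval_br0_t_left op_eval_br1_skew[of \<mu> n])

abbreviation sum_scale :: "complex \<Rightarrow> 'a \<times> 'b \<Rightarrow> 'a \<times> 'b" where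
  "sum_scale \<equiv> \<lambda>c. map_prod (s0 c) (s1 c)"

abbreviation sum_D :: "'a \<times> 'b \<Rightarrow> 'a \<times> 'b" where
  "sum_D \<equiv> map_prod D0 D1"

abbreviation sum_bracket :: "'a \<times> 'b \<Rightarrow> 'a \<times> 'b \<Rightarrow> ('a \<times> 'b) poly" where
  "sum_bracket \<equiv> semidirect_bracket D1 br0 rho br1"

lemma cdmodule_sum: "cdmodule sum_scale sum_D"
  by (rule cdmodule_prod[OF cdmodule0 cdmodule1])

lemma peval_sum [simp]:
  "peval sum_scale (pair_poly P Q) z = (op_eval (s0 z) P, op_eval (s1 z) Q)"
  by (simp add: peval_eq_op_eval[OF cdmoduleD(1)[OF cdmodule_sum]] op_eval_pair_poly)

lemmas sesquilinear_simps [simp] =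
  sesquilinear0[unfolded sesquilinear_def, THEN conjunct1, rule_format]
  sesquilinear0[unfolded sesquilinear_def, THEN conjunct2, rule_format]
  sesquilinear1[unfolded sesquilinear_def, THEN conjunct1, rule_format]
  sesquilinear1[unfolded sesquilinear_def, THEN conjunct2, rule_format]
  sesquilinear_rho[unfolded sesquilinear_def, THEN conjunct1, rule_format]
  sesquilinear_rho[unfolded sesquilinear_def, THEN conjunct2, rule_format]

lemma neg_subst_scale1: "neg_subst D1 (map_poly (s1 c) P) = map_poly (s1 c) (neg_subst D1 P)"
  by (rule neg_subst_map_poly) (simp_all add: cdmoduleD(3)[OF cdmodule1])

lemma bilinear_sum_bracket: "bilinear_lam sum_scale sum_scale sum_scale sum_bracket"
  unfolding bilinear_lam_def spoly_def
  by (simp add: bilinear_lam_scale[OF bilinear0] bilinear_lam_scale[OF bilinear1]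
      bilinear_lam_scale[OF bilinear_rho] neg_subst_scale1 map_poly_pair_poly map_poly_additive
      algebra_simps)

lemma sesquilinear_sum_bracket: "sesquilinear sum_D sum_D sum_bracket"
  unfolding sesquilinear_def Dpoly_def
  by (simp add: map_poly_pair_poly neg_subst_lam_mul neg_subst_Dpoly[unfolded Dpoly_def]
      neg_shift_def Dpoly_def map_poly_additive algebra_simps)

lemma skew_sum_bracket: "sum_bracket a b = - neg_subst sum_D (sum_bracket b a)"
proof -
  obtain p m q n where "a = (p, m)" "b = (q, n)"
    by fastforce
  then show ?thesis
    by (simp add: neg_subst_pair_poly skew0[of p q] skew1[of m n] neg_subst_neg_subst)
qed

lemma jacobi_sum_bracket_pure:
  assumes "a \<in> range (\<lambda>p. (p, 0)) \<union> range (Pair 0)"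
    and "b \<in> range (\<lambda>p. (p, 0)) \<union> range (Pair 0)"
    and "c \<in> range (\<lambda>p. (p, 0)) \<union> range (Pair 0)"
  shows "conformal_jacobi sum_scale sum_bracket a b c"
proof -
  have swap: "conformal_jacobi sum_scale sum_bracket b a c"
    if "conformal_jacobi sum_scale sum_bracket a b c" for a b c
    using that
    by (rule conformal_jacobi_swap[OF cdmodule_sum bilinear_sum_bracket sesquilinear_sum_bracket
          skew_sum_bracket])
  have L0_L0_L0: "conformal_jacobi sum_scale sum_bracket (p, 0) (q, 0) (r, 0)" for p q r
    using jacobi0[of p q r] by (simp add: conformal_jacobi_def)
  have L0_L0_L1: "conformal_jacobi sum_scale sum_bracket (p, 0) (q, 0) (0, k)" for p q k
    using rep_jacobi[of _ p _ q k] by (simp add: conformal_jacobi_def)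
  have L0_L1_L0: "conformal_jacobi sum_scale sum_bracket (p, 0) (0, n) (r, 0)" for p n r
    using rep_jacobi_neg_shift[of _ p _ r n] by (simp add: conformal_jacobi_def)
  have L0_L1_L1: "conformal_jacobi sum_scale sum_bracket (p, 0) (0, n) (0, k)" for p n k
    using rho_derivation[of _ p _ n k] by (simp add: conformal_jacobi_def)
  have L1_L1_L0: "conformal_jacobi sum_scale sum_bracket (0, m) (0, n) (r, 0)" for m n r
    using br1_jacobi_neg_shift[of _ m _ r n] by (simp add: conformal_jacobi_def)
  have L1_L1_L1: "conformal_jacobi sum_scale sum_bracket (0, m) (0, n) (0, k)" for m n k
    using jacobi1[of m n k] by (simp add: conformal_jacobi_def)
  from assms show ?thesis
    by (auto intro: L0_L0_L0 L0_L0_L1 L0_L1_L0 L0_L1_L1 L1_L1_L0 L1_L1_L1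
        swap[OF L0_L1_L0] swap[OF L0_L1_L1])
qed

theorem LCA_sum: "LCA sum_scale sum_D sum_bracket"
  unfolding LCA_iff
  using cdmodule_sum bilinear_sum_bracket sesquilinear_sum_bracket skew_sum_bracket
    conformal_jacobi_prodI[OF cdmoduleD(1)[OF cdmodule_sum] bilinear_sum_bracket
      jacobi_sum_bracket_pure]
  by blast

end

theorem proposition4p9:
  fixes s0 :: "complex \<Rightarrow> 'a::ab_group_add \<Rightarrow> 'a" and D0 :: "'a \<Rightarrow> 'a"
    and br0 :: "'a \<Rightarrow> 'a \<Rightarrow> 'a poly" and N0 :: "'a \<Rightarrow> 'a"
    and s1 :: "complex \<Rightarrow> 'b::ab_group_add \<Rightarrow> 'b" and D1 :: "'b \<Rightarrow> 'b"
    and br1 :: "'b \<Rightarrow> 'b \<Rightarrow> 'b poly" and N1 :: "'b \<Rightarrow> 'b"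
    and t :: "'b \<Rightarrow> 'a" and rho :: "'a \<Rightarrow> 'b \<Rightarrow> 'b poly"
  assumes "crossed_module s0 D0 br0 N0 s1 D1 br1 N1 t rho"
  shows "NLCA (\<lambda>c (p, m). (s0 c p, s1 c m)) (map_prod D0 D1)
           (\<lambda>(p, m) (q, n). pair_poly (br0 p q) (rho p n - neg_subst D1 (rho q m) + br1 m n))
           (map_prod N0 N1)"
proof -
  note cm = assms[unfolded crossed_module_def NLCA_def NLCA_morphism_def NLCA_rep_def]
  interpret conformal_crossed_module s0 D0 br0 s1 D1 br1 t rho
    using cm by unfold_locales auto
  have N0: "cdlinear s0 D0 s0 D0 N0" "nijenhuis br0 N0"
    and N1: "cdlinear s1 D1 s1 D1 N1" "nijenhuis br1 N1"
    and rho_N: "\<And>p m. rho (N0 p) (N1 m) =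
      map_poly N1 (rho (N0 p) m + rho p (N1 m) - map_poly N1 (rho p m))"
    using cm by auto
  have "nijenhuis sum_bracket (map_prod N0 N1)"
    using N0(2) N1(2) rho_N cdlinearD(1)[OF N0(1)] cdlinearD(1)[OF N1(1)] additive_ops(2)
      cdlinearD(3)[OF N1(1)]
    by (rule nijenhuis_semidirect_bracket)
  then have "NLCA sum_scale sum_D sum_bracket (map_prod N0 N1)"
    unfolding NLCA_def using LCA_sum cdlinear_map_prod[OF N0(1) N1(1)] by blast
  moreover have "sum_scale = (\<lambda>c (p, m). (s0 c p, s1 c m))"
    by (simp add: map_prod_def)
  ultimately show ?thesis
    unfolding semidirect_bracket_def by simp
qed

end
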